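(* Let $k,n\ge1$, $m=kn-1$, and let $\varphi\in C^\infty(\mathbb P_m\mathbb C)$ be $g$-admissible and $G_{n,k}$-invariant with $\sup_{\mathbb P_m\mathbb C}\varphi=0$. Then $(\varphi-\psi)([1,\dots,1])\ge0$.
   Context: Homogeneous coordinates on $\mathbb P_m\mathbb C$, $m=kn-1$, are written $[z_0,\dots,z_m]=[Z_0,\dots,Z_{k-1}]$ with blocks $Z_h=(z_{hn},\dots,z_{(h+1)n-1})$. The metric $g$ has components $g_{\lambda\bar\mu}=a_m\,\partial^2\ln(1+|z_1|^2+\cdots+|z_m|^2)/\partial z_\lambda\partial\bar z_\mu$ in the chart $\{z_0=1\}$, for a fixed $a_m>0$. $\varphi$ is $g$-admissible if $g_{\lambda\bar\mu}+\partial^2\varphi/\partial z_\lambda\partial\bar z_\mu$ is positive definite everywhere. $G_{n,k}$ is the automorphism group generated by swaps of two blocks $Z_i,Z_j$, multiplication of a single coordinate $z_p$ by $e^{i\theta}$, and transpositions of two coordinates in the same block. $\psi([z_0,\dots,z_m])=\ln\big((|z_0|\cdots|z_m|)^{2a_m/(m+1)}/(|z_0|^2+\cdots+|z_m|^2)^{a_m}\big)$, so that $\psi([1,\dots,1])=-a_m\ln(m+1)$. *)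

theory Defs
  imports "HOL-Analysis.Analysis"
begin

fun dderivs :: "'a::real_normed_vector list \<Rightarrow> ('a \<Rightarrow> real) \<Rightarrow> 'a \<Rightarrow> real" where
  "dderivs [] f = f"
| "dderivs (v # vs) f = (\<lambda>x. frechet_derivative (dderivs vs f) (at x) v)"

definition smooth_on :: "'a::real_normed_vector set \<Rightarrow> ('a \<Rightarrow> real) \<Rightarrow> bool" where
  "smooth_on U f \<longleftrightarrow> (\<forall>vs. \<forall>x\<in>U. dderivs vs f differentiable (at x))"

text \<open>Homogeneous coordinates: a point of C^(N) is z :: complex^'i, and
  ix : {0..<N} -> 'i is a fixed enumeration; coordinate z_p is z $ ix p.\<close>
definition ecoord :: "(nat \<Rightarrow> 'i) \<Rightarrow> nat \<Rightarrow> complex \<Rightarrow> complex^'i" where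
  "ecoord ix p c = axis (ix p) c"

text \<open>Wirtinger second derivative d^2 f / dz_l d(conj z_m) at z.\<close>
definition wirt2 :: "(nat \<Rightarrow> 'i::finite) \<Rightarrow> (complex^'i \<Rightarrow> real) \<Rightarrow> complex^'i \<Rightarrow> nat \<Rightarrow> nat \<Rightarrow> complex" where
  "wirt2 ix f z l m =
     (let xl = ecoord ix l 1; yl = ecoord ix l \<i>;
          xm = ecoord ix m 1; ym = ecoord ix m \<i>
      in (complex_of_real (dderivs [xl, xm] f z + dderivs [yl, ym] f z)
          + \<i> * complex_of_real (dderivs [xl, ym] f z - dderivs [yl, xm] f z)) / 4)"

text \<open>Kahler potential of g on the cone: a * ln(|z_0|^2+...+|z_m|^2);
  on the chart z_j = 1 it is a * ln(1 + sum of |w|^2).\<close>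
definition kpot :: "real \<Rightarrow> complex^'i::finite \<Rightarrow> real" where
  "kpot a z = a * ln (\<Sum>i\<in>UNIV. (cmod (z $ i))\<^sup>2)"

text \<open>g-admissibility of phi (lifted to Phi on C^N - {0}, homogeneous of
  degree 0): in every affine chart {z_j = 1}, with affine coordinates
  z_l, l \<noteq> j, the matrix g_{l mbar} + d^2 phi/dz_l dzbar_m is positive definite.\<close>
definition g_admissible :: "real \<Rightarrow> nat \<Rightarrow> (nat \<Rightarrow> 'i::finite) \<Rightarrow> (complex^'i \<Rightarrow> real) \<Rightarrow> bool" where
  "g_admissible a N ix Phi \<longleftrightarrow>
     (\<forall>j<N. \<forall>z. z $ ix j = 1 \<longrightarrow>
        (\<forall>\<xi>::nat \<Rightarrow> complex. (\<exists>l\<in>{..<N}-{j}. \<xi> l \<noteq> 0) \<longrightarrow>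
          (let q = (\<Sum>l\<in>{..<N}-{j}. \<Sum>m\<in>{..<N}-{j}.
                      (wirt2 ix (kpot a) z l m + wirt2 ix Phi z l m) * \<xi> l * cnj (\<xi> m))
           in q \<in> \<real> \<and> 0 < Re q)))"

definition perm_act :: "nat \<Rightarrow> (nat \<Rightarrow> 'i) \<Rightarrow> (nat \<Rightarrow> nat) \<Rightarrow> complex^'i \<Rightarrow> complex^'i" where
  "perm_act N ix s z = (\<chi> i. z $ ix (s (inv_into {..<N} ix i)))"

definition phase_act :: "(nat \<Rightarrow> 'i) \<Rightarrow> nat \<Rightarrow> real \<Rightarrow> complex^'i \<Rightarrow> complex^'i" where
  "phase_act ix p \<theta> z = (\<chi> i. if i = ix p then exp (\<i> * complex_of_real \<theta>) * z $ i else z $ i)"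

definition block_swap :: "nat \<Rightarrow> nat \<Rightarrow> nat \<Rightarrow> nat \<Rightarrow> nat" where
  "block_swap n i j p =
     (if p div n = i then j * n + p mod n
      else if p div n = j then i * n + p mod n else p)"

definition G_invariant :: "nat \<Rightarrow> nat \<Rightarrow> (nat \<Rightarrow> 'i) \<Rightarrow> (complex^'i \<Rightarrow> real) \<Rightarrow> bool" where
  "G_invariant n k ix Phi \<longleftrightarrow>
     (\<forall>i<k. \<forall>j<k. \<forall>z. Phi (perm_act (k*n) ix (block_swap n i j) z) = Phi z) \<and>
     (\<forall>p<k*n. \<forall>\<theta>. \<forall>z. Phi (phase_act ix p \<theta> z) = Phi z) \<and>
     (\<forall>p<k*n. \<forall>q<k*n. p div n = q div n \<longrightarrow>
        (\<forall>z. Phi (perm_act (k*n) ix (Transposition.transpose p q) z) = Phi z))"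

definition psi :: "real \<Rightarrow> nat \<Rightarrow> complex^'i::finite \<Rightarrow> real" where
  "psi a N z = ln ((\<Prod>i\<in>UNIV. cmod (z $ i)) powr (2 * a / real N)
                   / (\<Sum>i\<in>UNIV. (cmod (z $ i))\<^sup>2) powr a)"

end

theory Submission
  imports Defs
begin

(*
  For a torus-invariant function, the second derivative along a curve
  s \<mapsto> (e^(s t_0), ..., e^(s t_m)) with t_0 = 0, which stays in the chart z_0 = 1, is four
  times its Levi form in that chart at the real vector (t_i e^(s t_i)).  By g-admissibility,
  f(s) = a ln |z|^2 + Phi(z) along the curve is therefore convex.  Because Phi <= 0,
  f(s) <= a ln(m+1) + 2 a s max t for s >= 0, so convexity bounds f(1) - f(0) by 2 a max t,
  while f(1) >= Phi(e^t) + 2 a max t.  Hence Phi <= Phi(1,...,1) + a ln(m+1) at all points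
  with positive coordinates, and then everywhere by rotation and continuity; taking the
  supremum gives 0 <= Phi(1,...,1) + a ln(m+1) = (Phi - psi)(1,...,1).
*)

lemma has_real_derivative_comp_dderivs:
  fixes F :: "'a::real_normed_vector \<Rightarrow> real" and c :: "real \<Rightarrow> 'a"
  assumes "F differentiable (at (c \<tau>))"
    and "(c has_vector_derivative (\<Sum>k\<in>I. p k *\<^sub>R e k)) (at \<tau>)"
  shows "((\<lambda>\<tau>. F (c \<tau>)) has_real_derivative (\<Sum>k\<in>I. p k * dderivs [e k] F (c \<tau>))) (at \<tau>)"
proof -
  let ?D = "frechet_derivative F (at (c \<tau>))"
  have dF: "(F has_derivative ?D) (at (c \<tau>))"
    using assms(1) frechet_derivative_works by blast
  have "linear ?D"
    using dF has_derivative_linear by blast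
  then have D: "?D (h *\<^sub>R (\<Sum>k\<in>I. p k *\<^sub>R e k)) = (\<Sum>k\<in>I. p k * dderivs [e k] F (c \<tau>)) * h" for h
    by (simp add: linear_scale linear_sum sum_distrib_left ac_simps)
  have "((\<lambda>\<tau>. F (c \<tau>)) has_derivative (\<lambda>h. ?D (h *\<^sub>R (\<Sum>k\<in>I. p k *\<^sub>R e k)))) (at \<tau>)"
    using has_derivative_compose[OF assms(2)[unfolded has_vector_derivative_def] dF] .
  then show ?thesis
    unfolding has_field_derivative_def D .
qed

lemma has_real_derivative_sum_dderivs_comp:
  fixes F :: "'a::real_normed_vector \<Rightarrow> real" and c :: "real \<Rightarrow> 'a"
  assumes "\<And>k. k \<in> I \<Longrightarrow> dderivs [e k] F differentiable (at (c \<tau>))"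
    and "(c has_vector_derivative (\<Sum>k\<in>I. p k \<tau> *\<^sub>R e k)) (at \<tau>)"
    and "\<And>k. k \<in> I \<Longrightarrow> (p k has_real_derivative p' k) (at \<tau>)"
  shows "((\<lambda>\<tau>. \<Sum>k\<in>I. p k \<tau> * dderivs [e k] F (c \<tau>)) has_real_derivative
     (\<Sum>k\<in>I. p' k * dderivs [e k] F (c \<tau>)
              + (\<Sum>j\<in>I. p j \<tau> * dderivs [e j, e k] F (c \<tau>)) * p k \<tau>)) (at \<tau>)"
proof (rule DERIV_sum)
  fix k assume k: "k \<in> I"
  have "((\<lambda>\<tau>. dderivs [e k] F (c \<tau>)) has_real_derivative
          (\<Sum>j\<in>I. p j \<tau> * dderivs [e j, e k] F (c \<tau>))) (at \<tau>)"
    using has_real_derivative_comp_dderivs[OF assms(1)[OF k] assms(2)] by simp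
  from DERIV_mult[OF assms(3)[OF k] this]
  show "((\<lambda>\<tau>. p k \<tau> * dderivs [e k] F (c \<tau>)) has_real_derivative
     p' k * dderivs [e k] F (c \<tau>) + (\<Sum>j\<in>I. p j \<tau> * dderivs [e j, e k] F (c \<tau>)) * p k \<tau>) (at \<tau>)" .
qed

lemma has_vector_derivative_sum_scaleR:
  assumes "\<And>k. k \<in> I \<Longrightarrow> (p k has_real_derivative p' k) (at \<tau>)"
  shows "((\<lambda>\<tau>. \<Sum>k\<in>I. p k \<tau> *\<^sub>R e k) has_vector_derivative (\<Sum>k\<in>I. p' k *\<^sub>R e k)) (at \<tau>)"
  by (rule has_vector_derivative_sum) (use assms in \<open>auto intro!: derivative_eq_intros\<close>)

definition torus_invariant :: "(complex^'i::finite \<Rightarrow> real) \<Rightarrow> bool" where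
  "torus_invariant F \<longleftrightarrow> (\<forall>\<omega> z. F (\<chi> i. exp (\<i> * of_real (\<omega> i)) * z $ i) = F z)"

lemma torus_invariant_if_phase_invariant:
  fixes ix :: "nat \<Rightarrow> 'i::finite" and F :: "complex^'i \<Rightarrow> real"
  assumes bij: "bij_betw ix {..<N} (UNIV :: 'i set)"
    and phase: "\<And>p \<theta> z. p < N \<Longrightarrow> F (phase_act ix p \<theta> z) = F z"
  shows "torus_invariant F"
proof -
  have "F (\<chi> i. if i \<in> S then exp (\<i> * of_real (\<omega> i)) * z $ i else z $ i) = F z"
    if "finite S" for \<omega> z S
    using that
  proof (induction S rule: finite_induct)
    case empty
    then show ?case
      by simp
  next
    case (insert i S)
    obtain p where p: "p < N" "ix p = i"
      using bij unfolding bij_betw_def by (metis UNIV_I imageE lessThan_iff)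
    have "(\<chi> j. if j \<in> insert i S then exp (\<i> * of_real (\<omega> j)) * z $ j else z $ j)
        = phase_act ix p (\<omega> i) (\<chi> j. if j \<in> S then exp (\<i> * of_real (\<omega> j)) * z $ j else z $ j)"
      using insert.hyps(2) p by (auto simp: vec_eq_iff phase_act_def)
    then show ?case
      using phase[OF p(1)] insert.IH by simp
  qed
  from this[of UNIV] show ?thesis
    by (simp add: torus_invariant_def)
qed

lemma torus_invariant_kpot: "torus_invariant (kpot a)"
  by (simp add: torus_invariant_def kpot_def norm_mult)

lemma exp_neg_Arg_mult: "exp (\<i> * of_real (- Arg w)) * w = of_real (cmod w)"
proof -
  have "w = of_real (cmod w) * cis (Arg w)"
    by (metis rcis_cmod_Arg rcis_def)
  then have "exp (\<i> * of_real (- Arg w)) * w = of_real (cmod w) * (cis (- Arg w) * cis (Arg w))"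
    by (simp add: cis_conv_exp ac_simps)
  then show ?thesis
    by (simp add: cis_mult)
qed

lemma torus_invariant_moduli:
  assumes "torus_invariant F"
  shows "F (\<chi> i. of_real (cmod (z $ i))) = F z"
  using assms[unfolded torus_invariant_def, rule_format, of "\<lambda>i. - Arg (z $ i)" z]
  unfolding exp_neg_Arg_mult .

lemma scaleR_vec_complex: "c *\<^sub>R z = (\<chi> i. complex_of_real c * z $ i)"
  by (simp add: vec_eq_iff scaleR_conv_of_real[where 'a=complex])

lemma sum_dderivs_eq_0_if_constant_along:
  fixes F :: "'a::real_normed_vector \<Rightarrow> real" and c :: "real \<Rightarrow> 'a"
  assumes const: "\<And>\<theta>. F (c \<theta>) = F (c 0)"
    and diff: "\<And>\<theta>. F differentiable (at (c \<theta>))"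
    and diff1: "\<And>\<theta> k. k \<in> I \<Longrightarrow> dderivs [e k] F differentiable (at (c \<theta>))"
    and c: "\<And>\<theta>. (c has_vector_derivative (\<Sum>k\<in>I. p k \<theta> *\<^sub>R e k)) (at \<theta>)"
    and p: "\<And>\<theta> k. k \<in> I \<Longrightarrow> (p k has_real_derivative p' k \<theta>) (at \<theta>)"
  shows "(\<Sum>k\<in>I. p' k 0 * dderivs [e k] F (c 0)
           + (\<Sum>j\<in>I. p j 0 * dderivs [e j, e k] F (c 0)) * p k 0) = 0"
proof -
  define g where "g \<theta> = (\<Sum>k\<in>I. p k \<theta> * dderivs [e k] F (c \<theta>))" for \<theta>
  have "(\<lambda>\<theta>. F (c \<theta>)) = (\<lambda>_. F (c 0))"
    using const by auto
  moreover have "((\<lambda>\<theta>. F (c \<theta>)) has_real_derivative g \<theta>) (at \<theta>)" for \<theta>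
    unfolding g_def by (rule has_real_derivative_comp_dderivs[OF diff c])
  ultimately have "g \<theta> = 0" for \<theta>
    using DERIV_unique[OF _ DERIV_const] by metis
  then have "g = (\<lambda>_. 0)"
    by auto
  moreover have "(g has_real_derivative (\<Sum>k\<in>I. p' k 0 * dderivs [e k] F (c 0)
      + (\<Sum>j\<in>I. p j 0 * dderivs [e j, e k] F (c 0)) * p k 0)) (at 0)"
    unfolding g_def[abs_def] by (rule has_real_derivative_sum_dderivs_comp[OF diff1 c p])
  ultimately show ?thesis
    using DERIV_unique[OF _ DERIV_const] by blast
qed

lemma sum_UNIV_prod_bool:
  fixes f :: "'i::finite \<times> bool \<Rightarrow> 'b::comm_monoid_add"
  shows "(\<Sum>k\<in>UNIV. f k) = (\<Sum>i\<in>UNIV. f (i, False) + f (i, True))"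
proof -
  have "(\<Sum>k\<in>UNIV. f k) = (\<Sum>i\<in>UNIV. \<Sum>b\<in>UNIV. f (i, b))"
    by (simp add: sum.cartesian_product case_prod_unfold flip: UNIV_Times_UNIV)
  then show ?thesis
    by (simp add: UNIV_bool add.commute)
qed

(* F is constant on the torus orbit of a real point; differentiate twice along it. *)
lemma torus_invariant_angular_identity:
  fixes F :: "complex^'i::finite \<Rightarrow> real" and E t :: "'i \<Rightarrow> real"
  assumes inv: "torus_invariant F"
    and diff: "\<And>vs z. length vs \<le> 1 \<Longrightarrow> z \<noteq> 0 \<Longrightarrow> dderivs vs F differentiable (at z)"
    and nz: "(\<chi> i. complex_of_real (E i)) \<noteq> 0"
  shows "(\<Sum>i\<in>UNIV. \<Sum>j\<in>UNIV. t i * E i * (t j * E j) *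
            dderivs [axis j \<i>, axis i \<i>] F (\<chi> i. of_real (E i)))
       = (\<Sum>i\<in>UNIV. (t i)\<^sup>2 * E i * dderivs [axis i 1] F (\<chi> i. of_real (E i)))"
proof -
  define w where "w = (\<chi> i. complex_of_real (E i))"
  define e :: "'i \<times> bool \<Rightarrow> complex^'i" where "e k = axis (fst k) (if snd k then \<i> else 1)" for k
  define q where "q k \<theta> = (if snd k then E (fst k) * sin (\<theta> * t (fst k))
                              else E (fst k) * cos (\<theta> * t (fst k)))" for k \<theta>
  define q' where "q' k \<theta> = (if snd k then E (fst k) * (t (fst k) * cos (\<theta> * t (fst k)))
                               else - (E (fst k) * (t (fst k) * sin (\<theta> * t (fst k)))))" for k \<theta>
  define q'' where "q'' k \<theta> = (if snd k then - (E (fst k) * (t (fst k) * (t (fst k) * sin (\<theta> * t (fst k)))))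
                                else - (E (fst k) * (t (fst k) * (t (fst k) * cos (\<theta> * t (fst k))))))" for k \<theta>
  define c where "c \<theta> = (\<Sum>k\<in>UNIV. q k \<theta> *\<^sub>R e k)" for \<theta>
  have q: "(q k has_real_derivative q' k \<theta>) (at \<theta>)" for k \<theta>
    unfolding q_def q'_def by (cases "snd k") (auto intro!: derivative_eq_intros)
  have q': "(q' k has_real_derivative q'' k \<theta>) (at \<theta>)" for k \<theta>
    unfolding q'_def q''_def by (cases "snd k") (auto intro!: derivative_eq_intros)
  have c: "(c has_vector_derivative (\<Sum>k\<in>UNIV. q' k \<theta> *\<^sub>R e k)) (at \<theta>)" for \<theta>
    unfolding c_def[abs_def] by (rule has_vector_derivative_sum_scaleR[OF q])
  have c_eq: "c \<theta> = (\<chi> i. exp (\<i> * of_real (\<theta> * t i)) * w $ i)" for \<theta>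
  proof -
    have "c \<theta> $ i = of_real (q (i, False) \<theta>) + \<i> * of_real (q (i, True) \<theta>)" for i
      by (simp add: c_def e_def sum_UNIV_prod_bool axis_def if_distrib sum.distrib cong: if_cong)
        (simp add: scaleR_conv_of_real)
    then show ?thesis
      by (simp add: vec_eq_iff q_def w_def complex_eq_iff Re_exp Im_exp)
  qed
  obtain j where "E j \<noteq> 0"
    using nz by (auto simp: vec_eq_iff)
  then have c_nz: "c \<theta> \<noteq> 0" for \<theta>
    by (auto simp: vec_eq_iff c_eq w_def intro!: exI[of _ j])
  have "c 0 = w"
    by (simp add: c_eq vec_eq_iff)
  moreover have "(\<Sum>k\<in>UNIV. q'' k 0 * dderivs [e k] F (c 0)
        + (\<Sum>j\<in>UNIV. q' j 0 * dderivs [e j, e k] F (c 0)) * q' k 0) = 0"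
  proof (rule sum_dderivs_eq_0_if_constant_along[OF _ _ _ c q'])
    show "F (c \<theta>) = F (c 0)" for \<theta>
      unfolding c_eq by (simp only: inv[unfolded torus_invariant_def, rule_format])
  qed (use diff[of "[]"] diff[of "[_]"] c_nz in simp_all)
  ultimately have "(\<Sum>i\<in>UNIV. (\<Sum>j\<in>UNIV. t j * E j * dderivs [axis j \<i>, axis i \<i>] F w) * (t i * E i)
      - (t i)\<^sup>2 * E i * dderivs [axis i 1] F w) = 0"
    by (simp add: sum_UNIV_prod_bool q'_def q''_def e_def power2_eq_square mult_ac del: dderivs.simps)
  then show ?thesis
    unfolding sum_subtractf sum_distrib_right w_def[symmetric] by (simp add: mult_ac del: dderivs.simps)
qed

definition exp_curve :: "('i::finite \<Rightarrow> real) \<Rightarrow> real \<Rightarrow> complex^'i" where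
  "exp_curve t s = (\<chi> i. of_real (exp (s * t i)))"

definition radial_deriv :: "(complex^'i::finite \<Rightarrow> real) \<Rightarrow> ('i \<Rightarrow> real) \<Rightarrow> real \<Rightarrow> real" where
  "radial_deriv F t s = (\<Sum>i\<in>UNIV. t i * exp (s * t i) * dderivs [axis i 1] F (exp_curve t s))"

definition radial_hessian :: "(complex^'i::finite \<Rightarrow> real) \<Rightarrow> ('i \<Rightarrow> real) \<Rightarrow> real \<Rightarrow> real" where
  "radial_hessian F t s = (\<Sum>i\<in>UNIV. \<Sum>j\<in>UNIV. t i * exp (s * t i) * (t j * exp (s * t j)) *
      (dderivs [axis j 1, axis i 1] F (exp_curve t s) + dderivs [axis j \<i>, axis i \<i>] F (exp_curve t s)))"

lemma exp_curve_nonzero: "exp_curve t s \<noteq> 0"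
  by (simp add: exp_curve_def vec_eq_iff)

lemma exp_curve_has_vector_derivative:
  "(exp_curve t has_vector_derivative (\<Sum>i\<in>UNIV. (t i * exp (s * t i)) *\<^sub>R axis i 1)) (at s)"
proof -
  have "exp_curve t = (\<lambda>s. \<Sum>i\<in>UNIV. exp (s * t i) *\<^sub>R axis i 1)"
    by (simp add: fun_eq_iff exp_curve_def vec_eq_iff axis_def if_distrib cong: if_cong)
      (simp add: scaleR_conv_of_real)
  then show ?thesis
    by (auto intro!: has_vector_derivative_sum_scaleR derivative_eq_intros)
qed

lemma has_real_derivative_exp_curve:
  assumes "\<And>z. z \<noteq> 0 \<Longrightarrow> F differentiable (at z)"
  shows "((\<lambda>s. F (exp_curve t s)) has_real_derivative radial_deriv F t s) (at s)"
  unfolding radial_deriv_def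
  by (rule has_real_derivative_comp_dderivs[OF assms[OF exp_curve_nonzero] exp_curve_has_vector_derivative])

lemma radial_deriv_has_real_derivative:
  assumes inv: "torus_invariant F"
    and diff: "\<And>vs z. length vs \<le> 1 \<Longrightarrow> z \<noteq> 0 \<Longrightarrow> dderivs vs F differentiable (at z)"
  shows "(radial_deriv F t has_real_derivative radial_hessian F t s) (at s)"
proof -
  let ?v = "\<lambda>i. t i * exp (s * t i)"
  let ?z = "exp_curve t s"
  have "radial_hessian F t s
      = (\<Sum>i\<in>UNIV. \<Sum>j\<in>UNIV. ?v i * ?v j * dderivs [axis j 1, axis i 1] F ?z)
      + (\<Sum>i\<in>UNIV. \<Sum>j\<in>UNIV. ?v i * ?v j * dderivs [axis j \<i>, axis i \<i>] F ?z)"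
    by (simp add: radial_hessian_def sum.distrib distrib_left del: dderivs.simps)
  also have "(\<Sum>i\<in>UNIV. \<Sum>j\<in>UNIV. ?v i * ?v j * dderivs [axis j \<i>, axis i \<i>] F ?z)
      = (\<Sum>i\<in>UNIV. t i * ?v i * dderivs [axis i 1] F ?z)"
    using torus_invariant_angular_identity[OF inv diff exp_curve_nonzero[of t s, unfolded exp_curve_def], of t]
    by (simp add: exp_curve_def power2_eq_square mult_ac del: dderivs.simps)
  also have "(\<Sum>i\<in>UNIV. \<Sum>j\<in>UNIV. ?v i * ?v j * dderivs [axis j 1, axis i 1] F ?z)
      + (\<Sum>i\<in>UNIV. t i * ?v i * dderivs [axis i 1] F ?z)
      = (\<Sum>i\<in>UNIV. t i * ?v i * dderivs [axis i 1] F ?z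
          + (\<Sum>j\<in>UNIV. ?v j * dderivs [axis j 1, axis i 1] F ?z) * ?v i)" (is "_ = ?D")
    by (simp add: sum.distrib sum_distrib_left sum_distrib_right mult_ac del: dderivs.simps)
  finally have hessian: "radial_hessian F t s = ?D" .
  show ?thesis
    unfolding hessian radial_deriv_def[abs_def]
    by (rule has_real_derivative_sum_dderivs_comp[where p="\<lambda>i s. t i * exp (s * t i)",
          OF _ exp_curve_has_vector_derivative])
       (auto intro!: diff exp_curve_nonzero derivative_eq_intros simp del: dderivs.simps)
qed

lemma kpot_has_derivative:
  fixes z :: "complex^'i::finite"
  assumes "z \<noteq> 0"
  shows "(kpot a has_derivative (\<lambda>h. a * ((h \<bullet> z + z \<bullet> h) / (z \<bullet> z)))) (at z)"
proof -
  have "kpot a = (\<lambda>z::complex^'i. a * ln (z \<bullet> z))"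
    by (auto simp: fun_eq_iff kpot_def inner_vec_def power2_norm_eq_inner)
  then show ?thesis
    using assms by (auto intro!: derivative_eq_intros simp: divide_inverse inner_commute)
qed

lemma kpot_dderivs_differentiable:
  fixes z :: "complex^'i::finite"
  assumes "length vs \<le> 1" and "z \<noteq> 0"
  shows "dderivs vs (kpot a) differentiable (at z)"
proof (cases vs)
  case Nil
  then show ?thesis
    using kpot_has_derivative[OF assms(2)] by (auto simp: differentiable_def)
next
  case (Cons e vs')
  with assms(1) have vs: "vs = [e]"
    by simp
  let ?g = "\<lambda>y::complex^'i. a * ((e \<bullet> y + y \<bullet> e) / (y \<bullet> y))"
  have "?g differentiable (at z)"
    unfolding differentiable_def using assms(2) by (intro exI) (auto intro!: derivative_eq_intros)
  then obtain g' where g': "(?g has_derivative g') (at z)"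
    unfolding differentiable_def by blast
  have agree: "?g y = dderivs [e] (kpot a) y" if "y \<in> UNIV - {0}" for y
  proof -
    have "(\<lambda>h. a * ((h \<bullet> y + y \<bullet> h) / (y \<bullet> y))) = frechet_derivative (kpot a) (at y)"
      using that kpot_has_derivative frechet_derivative_at by blast
    then show ?thesis
      by (simp add: fun_eq_iff)
  qed
  have "(dderivs [e] (kpot a) has_derivative g') (at z)"
    by (rule has_derivative_transform_within_open[OF g', where s="UNIV - {0}"]) (use assms(2) agree in auto)
  then show ?thesis
    unfolding vs differentiable_def by blast
qed

lemma Re_wirt2:
  "Re (wirt2 ix F z l m) = (dderivs [axis (ix l) 1, axis (ix m) 1] F z
                            + dderivs [axis (ix l) \<i>, axis (ix m) \<i>] F z) / 4"
  by (simp add: wirt2_def Let_def ecoord_def)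

lemma sum_UNIV_bij_betw_remove:
  fixes ix :: "nat \<Rightarrow> 'i::finite"
  assumes "bij_betw ix {..<N} (UNIV :: 'i set)" and "j < N" and "h (ix j) = 0"
  shows "(\<Sum>i\<in>UNIV. h i) = (\<Sum>l\<in>{..<N} - {j}. h (ix l))"
proof -
  have "(\<Sum>i\<in>UNIV. h i) = (\<Sum>l\<in>{..<N}. h (ix l))"
    using sum.reindex_bij_betw[OF assms(1), of h] by simp
  also have "\<dots> = (\<Sum>l\<in>{..<N} - {j}. h (ix l))"
    using assms(2,3) by (simp add: sum.remove)
  finally show ?thesis .
qed

(* As t (ix 0) = 0, exp_curve t lies in the chart z_(ix 0) = 1 and its velocity has no
   ix 0 component, so the sums over all coordinates are the Levi form of that chart. *)
lemma g_admissible_radial_hessian_nonneg: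
  fixes ix :: "nat \<Rightarrow> 'i::finite" and Phi :: "complex^'i \<Rightarrow> real"
  assumes bij: "bij_betw ix {..<N} (UNIV :: 'i set)" and N: "0 < N"
    and adm: "g_admissible a N ix Phi" and t0: "t (ix 0) = 0"
  shows "0 \<le> radial_hessian (kpot a) t s + radial_hessian Phi t s"
proof -
  let ?L = "{..<N} - {0}"
  let ?z = "exp_curve t s"
  define v where "v i = t i * exp (s * t i)" for i
  define X where "X i j = (dderivs [axis j 1, axis i 1] (kpot a) ?z + dderivs [axis j \<i>, axis i \<i>] (kpot a) ?z
      + dderivs [axis j 1, axis i 1] Phi ?z + dderivs [axis j \<i>, axis i \<i>] Phi ?z) / 4" for i j
  define q where "q = (\<Sum>l\<in>?L. \<Sum>m\<in>?L. (wirt2 ix (kpot a) ?z l m + wirt2 ix Phi ?z l m)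
      * of_real (v (ix l)) * cnj (of_real (v (ix m))))"
  have v0: "v (ix 0) = 0"
    by (simp add: v_def t0)
  have "0 \<le> Re q"
  proof (cases "\<exists>l\<in>?L. v (ix l) \<noteq> 0")
    case True
    have "?z $ ix 0 = 1"
      by (simp add: exp_curve_def t0)
    from adm[unfolded g_admissible_def, rule_format, OF N this, where \<xi>="\<lambda>l. of_real (v (ix l))"]
    show ?thesis
      using True unfolding q_def Let_def by simp
  qed (simp add: q_def)
  also have "Re q = (\<Sum>m\<in>?L. \<Sum>l\<in>?L. v (ix m) * v (ix l) * X (ix m) (ix l))"
    unfolding q_def Re_sum
    by (subst sum.swap) (intro sum.cong refl, simp add: Re_wirt2 X_def field_simps)
  also have "\<dots> = (\<Sum>i\<in>UNIV. \<Sum>j\<in>UNIV. v i * v j * X i j)"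
  proof -
    have "(\<Sum>j\<in>UNIV. v i * v j * X i j) = (\<Sum>l\<in>?L. v i * v (ix l) * X i (ix l))" for i
      by (rule sum_UNIV_bij_betw_remove[OF bij N]) (simp add: v0)
    moreover have "(\<Sum>i\<in>UNIV. \<Sum>l\<in>?L. v i * v (ix l) * X i (ix l))
        = (\<Sum>m\<in>?L. \<Sum>l\<in>?L. v (ix m) * v (ix l) * X (ix m) (ix l))"
      by (rule sum_UNIV_bij_betw_remove[OF bij N]) (simp add: v0)
    ultimately show ?thesis
      by simp
  qed
  also have "\<dots> = (radial_hessian (kpot a) t s + radial_hessian Phi t s) / 4"
    unfolding radial_hessian_def X_def v_def sum_divide_distrib sum.distrib[symmetric]
    by (intro sum.cong refl) (simp add: field_simps)
  finally show ?thesis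
    by simp
qed

lemma convex_on_exp_curve:
  fixes ix :: "nat \<Rightarrow> 'i::finite" and Phi :: "complex^'i \<Rightarrow> real"
  assumes bij: "bij_betw ix {..<N} (UNIV :: 'i set)" and N: "0 < N"
    and adm: "g_admissible a N ix Phi" and t0: "t (ix 0) = 0"
    and inv: "torus_invariant Phi"
    and diff: "\<And>vs z. length vs \<le> 1 \<Longrightarrow> z \<noteq> 0 \<Longrightarrow> dderivs vs Phi differentiable (at z)"
  shows "convex_on UNIV (\<lambda>s. kpot a (exp_curve t s) + Phi (exp_curve t s))"
proof (rule convex_on_realI[where f'="\<lambda>s. radial_deriv (kpot a) t s + radial_deriv Phi t s"])
  show "((\<lambda>s. kpot a (exp_curve t s) + Phi (exp_curve t s)) has_real_derivative
      radial_deriv (kpot a) t s + radial_deriv Phi t s) (at s)" for s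
    using kpot_dderivs_differentiable[of "[]"] diff[of "[]"]
    by (auto intro!: DERIV_add has_real_derivative_exp_curve)
  show "radial_deriv (kpot a) t x + radial_deriv Phi t x \<le> radial_deriv (kpot a) t y + radial_deriv Phi t y"
    if "x \<le> y" for x y
    using radial_deriv_has_real_derivative[OF torus_invariant_kpot kpot_dderivs_differentiable]
      radial_deriv_has_real_derivative[OF inv diff]
      g_admissible_radial_hessian_nonneg[where t=t, OF bij N adm t0]
    by (intro DERIV_nonneg_imp_nondecreasing[OF that]) (blast intro: DERIV_add)
qed simp

lemma convex_on_le_linear_bound:
  fixes f :: "real \<Rightarrow> real"
  assumes convex: "convex_on UNIV f" and bound: "\<And>S. 0 \<le> S \<Longrightarrow> f S \<le> A + B * S"
    and x: "0 \<le> x"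
  shows "f x \<le> f 0 + B * x"
proof -
  have "f x \<le> f 0 + B * x + x * (A - f 0) * inverse S" if S: "x < S" for S
  proof -
    have "f x = f ((1 - x / S) *\<^sub>R 0 + (x / S) *\<^sub>R S)"
      using S x by simp
    also have "\<dots> \<le> (1 - x / S) * f 0 + (x / S) * f S"
      using S x by (intro convex_onD[OF convex]) auto
    also have "\<dots> \<le> (1 - x / S) * f 0 + (x / S) * (A + B * S)"
      using S x bound[of S] by (intro add_left_mono mult_left_mono) auto
    also have "\<dots> = f 0 + B * x + x * (A - f 0) * inverse S"
      using S x by (simp add: field_simps)
    finally show ?thesis .
  qed
  then have "\<forall>\<^sub>F S in at_top. f x \<le> f 0 + B * x + x * (A - f 0) * inverse S"
    by (rule eventually_mono[OF eventually_gt_at_top[of x]])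
  moreover have "((\<lambda>S. f 0 + B * x + x * (A - f 0) * inverse S) \<longlongrightarrow> f 0 + B * x + x * (A - f 0) * 0) at_top"
    by (intro tendsto_intros tendsto_inverse_0_at_top filterlim_ident)
  ultimately show ?thesis
    using tendsto_le[OF trivial_limit_at_top_linorder _ tendsto_const] by fastforce
qed

lemma ln_sum_exp_ge:
  fixes u :: "'i::finite \<Rightarrow> real"
  shows "u j \<le> ln (\<Sum>i\<in>UNIV. exp (u i))"
proof -
  have "exp (u j) \<le> (\<Sum>i\<in>UNIV. exp (u i))"
    by (rule member_le_sum) auto
  then show ?thesis
    by (simp add: ln_ge_iff sum_pos)
qed

lemma ln_sum_exp_le:
  fixes u :: "'i::finite \<Rightarrow> real"
  assumes "\<And>i. u i \<le> M"
  shows "ln (\<Sum>i\<in>UNIV. exp (u i)) \<le> ln CARD('i) + M"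
proof -
  have "(\<Sum>i\<in>UNIV. exp (u i)) \<le> (\<Sum>i\<in>(UNIV :: 'i set). exp M)"
    using assms by (intro sum_mono) simp
  then have "ln (\<Sum>i\<in>UNIV. exp (u i)) \<le> ln (CARD('i) * exp M)"
    by (simp add: sum_pos)
  then show ?thesis
    by (simp add: ln_mult)
qed

lemma kpot_exp_curve: "kpot a (exp_curve t s) = a * ln (\<Sum>i\<in>UNIV. exp (2 * s * t i))"
  by (simp add: kpot_def exp_curve_def power2_eq_square mult.assoc flip: exp_add)

lemma admissible_exp_curve_le:
  fixes ix :: "nat \<Rightarrow> 'i::finite" and Phi :: "complex^'i \<Rightarrow> real"
  assumes bij: "bij_betw ix {..<N} (UNIV :: 'i set)" and N: "0 < N" and a: "0 < a"
    and adm: "g_admissible a N ix Phi" and t0: "t (ix 0) = 0"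
    and inv: "torus_invariant Phi"
    and diff: "\<And>vs z. length vs \<le> 1 \<Longrightarrow> z \<noteq> 0 \<Longrightarrow> dderivs vs Phi differentiable (at z)"
    and nonpos: "\<And>z. z \<noteq> 0 \<Longrightarrow> Phi z \<le> 0"
  shows "Phi (exp_curve t 1) \<le> Phi (exp_curve t 0) + a * ln N"
proof -
  define f where "f s = kpot a (exp_curve t s) + Phi (exp_curve t s)" for s
  define T where "T = Max (range t)"
  have card: "CARD('i) = N"
    using bij_betw_same_card[OF bij] by simp
  have bound: "f S \<le> a * ln N + 2 * a * T * S" if "0 \<le> S" for S
  proof -
    have "2 * S * t i \<le> 2 * S * T" for i
      using that by (simp add: T_def mult_left_mono)
    then have ln_bound: "ln (\<Sum>i\<in>UNIV. exp (2 * S * t i)) \<le> ln N + 2 * S * T"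
      using ln_sum_exp_le by (metis card)
    have "kpot a (exp_curve t S) \<le> a * ln N + 2 * a * T * S"
      using mult_left_mono[OF ln_bound, of a] a by (simp add: kpot_exp_curve algebra_simps)
    then show ?thesis
      using nonpos[OF exp_curve_nonzero, of t S] by (simp add: f_def)
  qed
  have "convex_on UNIV f"
    unfolding f_def by (rule convex_on_exp_curve[OF bij N adm _ inv diff]) (fact t0)
  from convex_on_le_linear_bound[OF this bound zero_le_one]
  have "f 1 \<le> f 0 + 2 * a * T"
    by simp
  moreover have "2 * a * T \<le> kpot a (exp_curve t 1)"
  proof -
    have "T \<in> range t"
      unfolding T_def by (rule Max_in) auto
    then obtain i0 where "t i0 = T"
      by auto
    then show ?thesis
      using ln_sum_exp_ge[of "\<lambda>i. 2 * 1 * t i" i0] a by (simp add: kpot_exp_curve)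
  qed
  moreover have "kpot a (exp_curve t 0) = a * ln N"
    by (simp add: kpot_exp_curve card)
  ultimately show ?thesis
    unfolding f_def by simp
qed

lemma admissible_le_at_positive:
  fixes ix :: "nat \<Rightarrow> 'i::finite" and Phi :: "complex^'i \<Rightarrow> real"
  assumes bij: "bij_betw ix {..<N} (UNIV :: 'i set)" and N: "0 < N" and a: "0 < a"
    and adm: "g_admissible a N ix Phi"
    and inv: "torus_invariant Phi"
    and diff: "\<And>vs z. length vs \<le> 1 \<Longrightarrow> z \<noteq> 0 \<Longrightarrow> dderivs vs Phi differentiable (at z)"
    and nonpos: "\<And>z. z \<noteq> 0 \<Longrightarrow> Phi z \<le> 0"
    and scale: "\<And>z c. z \<noteq> 0 \<Longrightarrow> 0 < c \<Longrightarrow> Phi (c *\<^sub>R z) = Phi z"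
    and r: "\<And>i. 0 < r i"
  shows "Phi (\<chi> i. of_real (r i)) \<le> Phi (\<chi> i. 1) + a * ln N"
proof -
  define t where "t i = ln (r i / r (ix 0))" for i
  have "t (ix 0) = 0"
    using r by (simp add: t_def)
  then have "Phi (exp_curve t 1) \<le> Phi (exp_curve t 0) + a * ln N"
    by (rule admissible_exp_curve_le[OF bij N a adm _ inv diff nonpos])
  moreover have "exp_curve t 1 = inverse (r (ix 0)) *\<^sub>R (\<chi> i. of_real (r i))"
    using r by (simp add: exp_curve_def t_def scaleR_vec_complex field_simps)
  moreover have "exp_curve t 0 = (\<chi> i. 1)"
    by (simp add: exp_curve_def vec_eq_iff)
  moreover have "(\<chi> i. complex_of_real (r i)) \<noteq> 0"
    using r by (simp add: vec_eq_iff) (metis less_irrefl)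
  ultimately show ?thesis
    using scale r[of "ix 0"] by simp
qed

lemma torus_invariant_le_of_le_positive:
  fixes F :: "complex^'i::finite \<Rightarrow> real"
  assumes inv: "torus_invariant F" and cont: "\<And>z. z \<noteq> 0 \<Longrightarrow> isCont F z"
    and pos: "\<And>r. (\<And>i. 0 < r i) \<Longrightarrow> F (\<chi> i. of_real (r i)) \<le> C"
    and z: "z \<noteq> 0"
  shows "F z \<le> C"
proof -
  define w where "w = (\<chi> i. complex_of_real (cmod (z $ i)))"
  have "w \<noteq> 0"
    using z by (auto simp: w_def vec_eq_iff)
  have "(\<lambda>m. w + (inverse (real (Suc m))) *\<^sub>R (\<chi> i. 1)) \<longlonglongrightarrow> w + 0 *\<^sub>R (\<chi> i. 1)"
    by (intro tendsto_intros LIMSEQ_inverse_real_of_nat)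
  then have "(\<lambda>m. F (w + (inverse (real (Suc m))) *\<^sub>R (\<chi> i. 1))) \<longlonglongrightarrow> F w"
    using isCont_tendsto_compose[OF cont[OF \<open>w \<noteq> 0\<close>]] by simp
  moreover have "F (w + (inverse (real (Suc m))) *\<^sub>R (\<chi> i. 1)) \<le> C" for m
  proof -
    have eq: "w + (inverse (real (Suc m))) *\<^sub>R (\<chi> i. 1) = (\<chi> i. of_real (cmod (z $ i) + inverse (real (Suc m))))"
      by (simp add: w_def scaleR_vec_complex vec_eq_iff)
    show ?thesis
      unfolding eq by (rule pos) (simp add: add_nonneg_pos)
  qed
  ultimately have "F w \<le> C"
    using LIMSEQ_le_const2 by blast
  then show ?thesis
    using torus_invariant_moduli[OF inv] by (simp add: w_def)
qed

lemma bdd_above_if_scale_invariant: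
  fixes F :: "'a::{real_normed_vector, perfect_space, heine_borel} \<Rightarrow> real"
  assumes cont: "\<And>z. z \<noteq> 0 \<Longrightarrow> isCont F z"
    and scale: "\<And>z c. z \<noteq> 0 \<Longrightarrow> 0 < c \<Longrightarrow> F (c *\<^sub>R z) = F z"
  shows "bdd_above (F ` (UNIV - {0}))"
proof -
  have "continuous_on (sphere 0 1) F"
    by (rule continuous_at_imp_continuous_on) (auto intro: cont)
  then have "bdd_above (F ` sphere 0 1)"
    by (intro bounded_imp_bdd_above compact_imp_bounded compact_continuous_image compact_sphere)
  then obtain M where M: "\<And>x. x \<in> sphere 0 1 \<Longrightarrow> F x \<le> M"
    unfolding bdd_above_def by blast
  have "F z \<le> M" if "z \<noteq> 0" for z
    using M[of "inverse (norm z) *\<^sub>R z"] scale[of z "inverse (norm z)"] that by simp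
  then show ?thesis
    by (auto simp: bdd_above_def)
qed

lemma psi_one:
  assumes "CARD('i::finite) = N" and "0 < N"
  shows "psi a N ((\<chi> i. 1) :: complex^'i) = - (a * ln N)"
  using assms by (simp add: psi_def ln_div)

theorem lemma4:
  fixes k n :: nat and a :: real
    and ix :: "nat \<Rightarrow> 'i::finite"
    and Phi :: "complex^'i \<Rightarrow> real"
  assumes "k \<ge> 1" and "n \<ge> 1"
    and "a > 0"
    and "bij_betw ix {..<k*n} (UNIV :: 'i set)"
    and "\<forall>z (c::complex). z \<noteq> 0 \<longrightarrow> c \<noteq> 0 \<longrightarrow> Phi (\<chi> i. c * z $ i) = Phi z"
    and "smooth_on (UNIV - {0}) Phi"
    and "g_admissible a (k*n) ix Phi"
    and "G_invariant n k ix Phi"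
    and "(SUP z\<in>UNIV - {0}. Phi z) = 0"
  shows "Phi (\<chi> i. 1) - psi a (k*n) ((\<chi> i. 1) :: complex^'i) \<ge> 0"
proof -
  define N where "N = k * n"
  have N: "0 < N" and bij: "bij_betw ix {..<N} (UNIV :: 'i set)" and adm: "g_admissible a N ix Phi"
    using assms(1,2,4,7) by (simp_all add: N_def)
  have diff: "dderivs vs Phi differentiable (at z)" if "z \<noteq> 0" for vs z
    using assms(6) that by (simp add: smooth_on_def)
  have cont: "isCont Phi z" if "z \<noteq> 0" for z
    using diff[of z "[]"] that by (simp add: differentiable_imp_continuous_within)
  have scale: "Phi (c *\<^sub>R z) = Phi z" if "z \<noteq> 0" "0 < c" for z c
    using assms(5) that by (simp add: scaleR_vec_complex)
  have inv: "torus_invariant Phi"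
    using assms(8) by (intro torus_invariant_if_phase_invariant[OF bij]) (simp add: G_invariant_def N_def)
  have nonpos: "Phi z \<le> 0" if "z \<noteq> 0" for z
    using cSUP_upper[OF _ bdd_above_if_scale_invariant[of Phi, OF cont scale]] assms(9) that by simp
  have "Phi z \<le> Phi (\<chi> i. 1) + a * ln N" if "z \<noteq> 0" for z
    using torus_invariant_le_of_le_positive[of Phi, OF inv cont
        admissible_le_at_positive[of ix N a Phi, OF bij N assms(3) adm inv diff nonpos scale] that] .
  moreover have "UNIV - {0} \<noteq> ({} :: (complex^'i) set)"
    using zero_neq_one[where 'a="complex^'i"] by blast
  ultimately have "0 \<le> Phi (\<chi> i. 1) + a * ln N"
    using cSUP_least[of "UNIV - {0}" Phi] assms(9) by simp
  moreover have "psi a N ((\<chi> i. 1) :: complex^'i) = - (a * ln N)"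
    using bij_betw_same_card[OF bij] N by (intro psi_one) simp_all
  ultimately show ?thesis
    by (simp add: N_def)
qed

end
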